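(* Let $k\ge1$, $0\le r<k$ and $n\ge0$ be integers. Then $$\sum_{j=0}^n(-1)^{n-j}\begin{bmatrix} n+r\\ n-j\end{bmatrix}_q q^{(k-1)\left(\binom{n}{2}-\binom{j}{2}\right)}F^{(k)}_{kj+r}(x;q)=x^{n+r}F^{(k)}_{(k-1)n}(x;q).$$
   Context: Here $q$ is an indeterminate. For integers $m\ge0$ and $j$, $\begin{bmatrix} m\\ j\end{bmatrix}_q=\frac{(1-q^m)(1-q^{m-1})\cdots(1-q^{m-j+1})}{(1-q)(1-q^2)\cdots(1-q^j)}$ for $0\le j\le m$ and $0$ otherwise. For an integer $k\ge1$, the $q$-Fibonacci polynomials $F^{(k)}_n(x;q)$ ($n\ge0$) are defined by $F^{(k)}_n(x;q)=x^n$ for $0\le n<k$ and $F^{(k)}_{n+k}(x;q)=xF^{(k)}_{n+k-1}(x;q)+q^nF^{(k)}_n(x;q)$ for $n\ge0$. *)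

theory Defs
  imports "HOL-Computational_Algebra.Polynomial"
begin

text \<open>We work in the polynomial ring rat[x][q]: the outer variable is q and the
coefficients are polynomials in x.\<close>

type_synonym qx = "rat poly poly"

definition qvar :: qx where "qvar = [:0, 1:]"
definition xvar :: qx where "xvar = [:[:0, 1:]:]"

text \<open>Gaussian binomial, defined as the quotient of the two products in the
polynomial ring (the division is exact).\<close>
definition qbinom :: "nat \<Rightarrow> int \<Rightarrow> qx" where
  "qbinom m j = (if 0 \<le> j \<and> j \<le> int m then
     (\<Prod>i<nat j. 1 - qvar ^ (m - i)) div (\<Prod>i=1..nat j. 1 - qvar ^ i)
   else 0)"

fun qfib :: "nat \<Rightarrow> nat \<Rightarrow> qx" where
  "qfib k n = (if n < k \<or> k = 0 then xvar ^ n
     else xvar * qfib k (n - 1) + qvar ^ (n - k) * qfib k (n - k))"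

end

theory Submission
  imports Defs
begin

text \<open>Generalise the sum: let the upper index a of the q-binomial be free and add a
weight q^(e(N-j)) to the j-th term. For a = N + r - e the sum equals
x^(N+r-e) F_((k-1)N+e). Splitting the q-binomial by the q-Pascal rule and pairing the
resulting terms through the Fibonacci recurrence shows that the sum at (N+1, r+1) is x
times the sum at (N+1, r), and the sum at (N+1, 0) is x times the sum at (N, k-1) with
e raised by k-1. An induction on N and then on r finishes the proof.\<close>

declare qfib.simps[simp del]

lemma qfib_below: "n < k \<Longrightarrow> qfib k n = xvar ^ n"
  by (subst qfib.simps) simp

lemma qfib_rec: "k \<ge> 1 \<Longrightarrow> qfib k (n + k) = xvar * qfib k (n + k - 1) + qvar ^ n * qfib k n"
  by (subst qfib.simps) simp

fun qbin :: "'a::comm_ring_1 \<Rightarrow> nat \<Rightarrow> nat \<Rightarrow> 'a" where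
  "qbin q a 0 = 1"
| "qbin q 0 (Suc i) = 0"
| "qbin q (Suc a) (Suc i) = q ^ (a - i) * qbin q a i + qbin q a (Suc i)"

lemma qbin_eq_0: "a < i \<Longrightarrow> qbin q a i = 0"
  by (induction q a i rule: qbin.induct) auto

lemma qbin_mult_prod:
  "qbin q a i * (\<Prod>l=1..i. 1 - q ^ l) = (\<Prod>l<i. 1 - q ^ (a - l))"
proof (induction q a i rule: qbin.induct)
  case (1 q a)
  then show ?case by simp
next
  case (2 q i)
  have "(\<Prod>l<Suc i. 1 - q ^ (0 - l)) = 0"
    by (rule prod_zero) auto
  then show ?case by simp
next
  case (3 q a i)
  define P where "P = (\<Prod>l=1..i. 1 - q ^ l)"
  define R where "R = (\<Prod>l<i. 1 - q ^ (a - l))"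
  have P1: "(\<Prod>l=1..Suc i. 1 - q ^ l) = P * (1 - q ^ Suc i)"
    unfolding P_def by (simp add: prod.nat_ivl_Suc')
  have R1: "(\<Prod>l<Suc i. 1 - q ^ (a - l)) = R * (1 - q ^ (a - i))"
    unfolding R_def by simp
  have R2: "(\<Prod>l<Suc i. 1 - q ^ (Suc a - l)) = (1 - q ^ Suc a) * R"
    unfolding R_def prod.lessThan_Suc_shift by simp
  have IH1: "qbin q a i * P = R" using 3(1) unfolding P_def R_def .
  have IH2: "qbin q a (Suc i) * (P * (1 - q ^ Suc i)) = R * (1 - q ^ (a - i))"
    using 3(2) unfolding P1[symmetric] R1[symmetric] .
  show ?case
  proof (cases "i \<le> a")
    case True
    have "a - i + Suc i = Suc a" using True by simp
    then have e1: "q ^ (a - i) * q ^ Suc i = q ^ Suc a" by (metis power_add)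
    have e2: "q ^ i * q ^ (a - i) = q ^ a"
      using True by (simp add: power_add[symmetric])
    have "qbin q (Suc a) (Suc i) * (\<Prod>l=1..Suc i. 1 - q ^ l)
        = q ^ (a - i) * (qbin q a i * P) * (1 - q ^ Suc i)
          + qbin q a (Suc i) * (P * (1 - q ^ Suc i))"
      unfolding P1 by (simp add: algebra_simps)
    also have "\<dots> = R * (q ^ (a - i) - q ^ (a - i) * q ^ Suc i + 1 - q ^ (a - i))"
      unfolding IH1 IH2 by (simp add: algebra_simps)
    also have "\<dots> = (1 - q ^ Suc a) * R" by (simp add: e1 e2 algebra_simps)
    finally show ?thesis using R2 by simp
  next
    case False
    have "R = 0" unfolding R_def using False by (intro prod_zero) (auto intro!: bexI[of _ a])
    moreover have "qbin q a i = 0" "qbin q a (Suc i) = 0"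
      using False by (auto intro: qbin_eq_0)
    moreover have "qbin q (Suc a) (Suc i) = 0"
      using False by (intro qbin_eq_0) simp
    ultimately show ?thesis using R2 by simp
  qed
qed

lemma one_minus_qvar_power_nonzero: "l \<ge> 1 \<Longrightarrow> (1 - qvar ^ l :: qx) \<noteq> 0"
proof
  assume "l \<ge> 1" "(1 - qvar ^ l :: qx) = 0"
  then have "coeff (1 - qvar ^ l :: qx) l = 0" by simp
  moreover have "qvar ^ l = (monom 1 l :: qx)" unfolding qvar_def
    by (simp add: monom_altdef)
  ultimately show False using \<open>l \<ge> 1\<close> by (simp add: coeff_monom)
qed

lemma qbinom_eq_qbin: "qbinom m (int j) = (if j \<le> m then qbin qvar m j else 0)"
proof -
  have "(\<Prod>l=1..j. 1 - qvar ^ l :: qx) \<noteq> 0"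
    using one_minus_qvar_power_nonzero by (simp add: prod_zero_iff)
  then show ?thesis
    unfolding qbinom_def using qbin_mult_prod[of qvar m j, symmetric] by simp
qed

definition qfib_binom_exp :: "nat \<Rightarrow> nat \<Rightarrow> nat \<Rightarrow> nat \<Rightarrow> nat" where
  "qfib_binom_exp k N j e = (k - 1) * ((N choose 2) - (j choose 2)) + e * (N - j)"

definition qfib_binom_sum :: "nat \<Rightarrow> nat \<Rightarrow> nat \<Rightarrow> nat \<Rightarrow> nat \<Rightarrow> qx" where
  "qfib_binom_sum k N a e r = (\<Sum>j=0..N. (-1) ^ (N - j) * qbin qvar a (N - j)
     * qvar ^ qfib_binom_exp k N j e * qfib k (k * j + r))"

lemma choose2_Suc: "Suc n choose 2 = (n choose 2) + n"
  by (simp add: numeral_2_eq_2)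

lemma qfib_binom_exp_Suc_Suc:
  assumes "k \<ge> 1" "j \<le> n"
  shows "qfib_binom_exp k (Suc n) (Suc j) e = qfib_binom_exp k n j (e + k - 1)"
proof -
  obtain k' where k: "k = Suc k'" using assms(1) by (cases k) auto
  have "j choose 2 \<le> n choose 2" using assms(2) by (rule binomial_right_mono)
  then have "(Suc n choose 2) - (Suc j choose 2) = ((n choose 2) - (j choose 2)) + (n - j)"
    unfolding choose2_Suc using assms(2) by simp
  then show ?thesis unfolding qfib_binom_exp_def k by (simp add: algebra_simps)
qed

text \<open>The exponent identity that lets the q-Pascal term of index j merge with the
recurrence term of index j + 1.\<close>
lemma qfib_binom_exp_pascal:
  assumes "k \<ge> 1" "j \<le> n" "n - j \<le> a" "a = n + r - e" "e \<le> n + r"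
  shows "a - (n - j) + qfib_binom_exp k (Suc n) j e
         = qfib_binom_exp k (Suc n) (Suc j) e + (k * j + r)"
proof -
  obtain k' where k: "k = Suc k'" using assms(1) by (cases k) auto
  define D where "D = (n choose 2) - (j choose 2)"
  have "j choose 2 \<le> n choose 2" using assms(2) by (rule binomial_right_mono)
  then have d1: "(Suc n choose 2) - (j choose 2) = D + n"
    and d2: "(Suc n choose 2) - (Suc j choose 2) = D + (n - j)"
    unfolding D_def choose2_Suc using assms(2) by simp_all
  have "D + n = D + (n - j) + j" using assms(2) by simp
  then have m1: "k' * (D + n) = k' * (D + (n - j)) + k' * j" by (simp only: distrib_left)
  have m2: "e * (Suc n - j) = e * (n - j) + e" using assms(2) by (simp add: Suc_diff_le)
  show ?thesis unfolding qfib_binom_exp_def d1 d2 k diff_Suc_1 diff_Suc_Suc m1 m2 mult_Suc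
    using assms(2-5) by linarith
qed

lemma qfib_binom_sum_Suc_split:
  "qfib_binom_sum k (Suc n) a e r
     = (-1) ^ Suc n * qbin qvar a (Suc n) * qvar ^ qfib_binom_exp k (Suc n) 0 e * qfib k r
       + (\<Sum>j=0..n. (-1) ^ (n - j) * qbin qvar a (n - j)
            * qvar ^ qfib_binom_exp k (Suc n) (Suc j) e * qfib k (k * j + r + k))"
  unfolding qfib_binom_sum_def sum.atLeast0_atMost_Suc_shift by (simp add: algebra_simps)

lemma qfib_binom_sum_pascal:
  "qfib_binom_sum k (Suc n) (Suc a) e r = qfib_binom_sum k (Suc n) a e r
     + (\<Sum>j=0..n. (-1) ^ Suc (n - j) * qbin qvar a (n - j)
          * qvar ^ (a - (n - j) + qfib_binom_exp k (Suc n) j e) * qfib k (k * j + r))"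
proof -
  have "(-1) ^ (Suc n - j) * qbin qvar (Suc a) (Suc n - j) * qvar ^ qfib_binom_exp k (Suc n) j e
          * qfib k (k * j + r)
      = (-1) ^ (Suc n - j) * qbin qvar a (Suc n - j) * qvar ^ qfib_binom_exp k (Suc n) j e
          * qfib k (k * j + r)
        + (-1) ^ Suc (n - j) * qbin qvar a (n - j)
          * qvar ^ (a - (n - j) + qfib_binom_exp k (Suc n) j e) * qfib k (k * j + r)"
    if "j \<in> {0..n}" for j
  proof -
    from that have j: "Suc n - j = Suc (n - j)" by auto
    show ?thesis unfolding j by (simp add: power_add algebra_simps)
  qed
  then have "(\<Sum>j=0..n. (-1) ^ (Suc n - j) * qbin qvar (Suc a) (Suc n - j)
          * qvar ^ qfib_binom_exp k (Suc n) j e * qfib k (k * j + r))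
      = (\<Sum>j=0..n. (-1) ^ (Suc n - j) * qbin qvar a (Suc n - j)
          * qvar ^ qfib_binom_exp k (Suc n) j e * qfib k (k * j + r))
      + (\<Sum>j=0..n. (-1) ^ Suc (n - j) * qbin qvar a (n - j)
          * qvar ^ (a - (n - j) + qfib_binom_exp k (Suc n) j e) * qfib k (k * j + r))"
    unfolding sum.distrib[symmetric] by (rule sum.cong[OF refl])
  then show ?thesis unfolding qfib_binom_sum_def sum.atLeast0_atMost_Suc by simp
qed

lemma qfib_binom_sum_Suc_Suc:
  assumes k: "k \<ge> 1" and "e \<le> n + r" "a = n + r - e"
  shows "qfib_binom_sum k (Suc n) (Suc a) e r
     = (-1) ^ Suc n * qbin qvar a (Suc n) * qvar ^ qfib_binom_exp k (Suc n) 0 e * qfib k r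
       + xvar * (\<Sum>j=0..n. (-1) ^ (n - j) * qbin qvar a (n - j)
            * qvar ^ qfib_binom_exp k (Suc n) (Suc j) e * qfib k (k * j + r + k - 1))"
proof -
  have merge: "(-1) ^ (n - j) * qbin qvar a (n - j) * qvar ^ qfib_binom_exp k (Suc n) (Suc j) e
          * qfib k (k * j + r + k)
        + (-1) ^ Suc (n - j) * qbin qvar a (n - j)
          * qvar ^ (a - (n - j) + qfib_binom_exp k (Suc n) j e) * qfib k (k * j + r)
     = xvar * ((-1) ^ (n - j) * qbin qvar a (n - j)
          * qvar ^ qfib_binom_exp k (Suc n) (Suc j) e * qfib k (k * j + r + k - 1))"
    if "j \<in> {0..n}" for j
  proof (cases "n - j \<le> a")
    case True
    then have "a - (n - j) + qfib_binom_exp k (Suc n) j e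
             = qfib_binom_exp k (Suc n) (Suc j) e + (k * j + r)"
      using qfib_binom_exp_pascal[OF k] assms that by simp
    then show ?thesis unfolding qfib_rec[OF k, of "k * j + r"]
      by (simp add: power_add algebra_simps)
  qed (simp add: qbin_eq_0)
  have "(\<Sum>j=0..n. (-1) ^ (n - j) * qbin qvar a (n - j)
          * qvar ^ qfib_binom_exp k (Suc n) (Suc j) e * qfib k (k * j + r + k))
      + (\<Sum>j=0..n. (-1) ^ Suc (n - j) * qbin qvar a (n - j)
          * qvar ^ (a - (n - j) + qfib_binom_exp k (Suc n) j e) * qfib k (k * j + r))
    = xvar * (\<Sum>j=0..n. (-1) ^ (n - j) * qbin qvar a (n - j)
          * qvar ^ qfib_binom_exp k (Suc n) (Suc j) e * qfib k (k * j + r + k - 1))"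
    unfolding sum.distrib[symmetric] sum_distrib_left by (rule sum.cong[OF refl merge])
  then show ?thesis
    unfolding qfib_binom_sum_pascal qfib_binom_sum_Suc_split[of k n a] by (simp add: algebra_simps)
qed

lemma qfib_binom_sum_top: "qfib_binom_sum k N 0 e r = qfib k (k * N + r)"
proof (cases N)
  case (Suc n)
  have "(\<Sum>j=0..n. (-1) ^ (Suc n - j) * qbin qvar 0 (Suc n - j)
          * qvar ^ qfib_binom_exp k (Suc n) j e * qfib k (k * j + r)) = 0"
    by (rule sum.neutral) (auto simp: Suc_diff_le)
  then show ?thesis
    unfolding Suc qfib_binom_sum_def sum.atLeast0_atMost_Suc by (simp add: qfib_binom_exp_def)
qed (simp add: qfib_binom_sum_def qfib_binom_exp_def)

lemma qfib_binom_sum_reduce_N: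
  assumes k: "k \<ge> 1" and "e \<le> n" "a = n - e"
  shows "qfib_binom_sum k (Suc n) (Suc a) e 0
         = xvar * qfib_binom_sum k n a (e + k - 1) (k - 1)"
proof -
  have "qbin qvar a (Suc n) = 0" using assms by (intro qbin_eq_0) simp
  moreover have "(\<Sum>j=0..n. (-1) ^ (n - j) * qbin qvar a (n - j)
          * qvar ^ qfib_binom_exp k (Suc n) (Suc j) e * qfib k (k * j + 0 + k - 1))
      = qfib_binom_sum k n a (e + k - 1) (k - 1)"
    unfolding qfib_binom_sum_def
    by (intro sum.cong refl) (use k in \<open>simp add: qfib_binom_exp_Suc_Suc[OF k]\<close>)
  ultimately show ?thesis using qfib_binom_sum_Suc_Suc[OF k, of e n 0 a] assms by simp
qed

lemma qfib_binom_sum_reduce_r: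
  assumes k: "k \<ge> 1" and "Suc r < k" "e \<le> n + Suc r" "a = n + Suc r - e"
  shows "qfib_binom_sum k (Suc n) (Suc a) e (Suc r) = xvar * qfib_binom_sum k (Suc n) a e r"
proof -
  have "qfib k (Suc r) = xvar * qfib k r" using assms(2) by (simp add: qfib_below)
  then show ?thesis
    unfolding qfib_binom_sum_Suc_Suc[OF k assms(3,4)] qfib_binom_sum_Suc_split[of k n a e r]
    by (simp add: algebra_simps)
qed

lemma qfib_binom_sum_closed_form:
  assumes k: "k \<ge> 1"
  shows "r < k \<Longrightarrow> e \<le> N + r
    \<Longrightarrow> qfib_binom_sum k N (N + r - e) e r = xvar ^ (N + r - e) * qfib k ((k - 1) * N + e)"
proof (induction N arbitrary: r e)
  case 0
  then show ?case
    by (simp add: qfib_binom_sum_def qfib_binom_exp_def qfib_below power_add[symmetric])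
next
  case (Suc n)
  show ?case using Suc.prems
  proof (induction r arbitrary: e)
    case 0
    show ?case
    proof (cases "e = Suc n")
      case True
      then have "(k - 1) * Suc n + e = k * Suc n" "Suc n + 0 - e = 0" using k by (cases k; simp)+
      then show ?thesis by (simp only:) (simp add: qfib_binom_sum_top)
    next
      case False
      then have e: "e \<le> n" "Suc n + 0 - e = Suc (n - e)" using 0 by simp_all
      have "n - e = n + (k - 1) - (e + k - 1)" "(k - 1) * n + (e + k - 1) = (k - 1) * Suc n + e"
        using k e by (cases k; simp add: algebra_simps)+
      then show ?thesis
        using Suc.IH[of "k - 1" "e + k - 1"] k e
        by (simp add: qfib_binom_sum_reduce_N[OF k])
    qed
  next
    case (Suc r)
    show ?case
    proof (cases "e = Suc n + Suc r")
      case True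
      then have "(k - 1) * Suc n + e = k * Suc n + Suc r" "Suc n + Suc r - e = 0"
        using k by (cases k; simp)+
      then show ?thesis by (simp only:) (simp add: qfib_binom_sum_top)
    next
      case False
      then have e: "e \<le> n + Suc r" "Suc n + Suc r - e = Suc (n + Suc r - e)"
        using Suc.prems by simp_all
      then show ?thesis
        using Suc.IH[of e] Suc.prems by (simp add: qfib_binom_sum_reduce_r[OF k])
    qed
  qed
qed

theorem mainTheorem17:
  fixes k r n :: nat
  assumes "k \<ge> 1" and "r < k"
  shows "(\<Sum>j=0..n. (-1) ^ (n - j) * qbinom (n + r) (int n - int j)
            * qvar ^ ((k - 1) * ((n choose 2) - (j choose 2))) * qfib k (k * j + r))
         = xvar ^ (n + r) * qfib k ((k - 1) * n)"
proof -
  have "qbinom (n + r) (int n - int j) = qbin qvar (n + r) (n - j)" if "j \<in> {0..n}" for j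
    using that qbinom_eq_qbin[of "n + r" "n - j"] by (simp add: of_nat_diff)
  then have "(\<Sum>j=0..n. (-1) ^ (n - j) * qbinom (n + r) (int n - int j)
            * qvar ^ ((k - 1) * ((n choose 2) - (j choose 2))) * qfib k (k * j + r))
       = qfib_binom_sum k n (n + r - 0) 0 r"
    unfolding qfib_binom_sum_def qfib_binom_exp_def by (intro sum.cong) simp_all
  also have "\<dots> = xvar ^ (n + r) * qfib k ((k - 1) * n)"
    using qfib_binom_sum_closed_form[OF assms, where e = 0 and N = n] by simp
  finally show ?thesis .
qed

end
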